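(* Let $c\geq 1$ be a real number and let $G$ be a finite graph with growth $f_G(r)\leq cr$ for every positive integer $r$. Then $G$ does not contain the $\lceil 2c\rceil\times\lceil 2c\rceil$ grid as a minor.
   Context: The growth of a finite graph $G$ is the function $f_G\colon\mathbb{N}\to\mathbb{N}$ where $f_G(r)$ is the maximum of $|V(H)|$ over all subgraphs $H$ of $G$ of radius at most $r$. For $n\in\mathbb{N}$, the $n\times n$ grid is the graph with vertex set $\{(v_1,v_2): v_1,v_2\in\{1,\dots,n\}\}$ where $(v_1,v_2)$ and $(u_1,u_2)$ are adjacent iff either $v_1=u_1$ and $|v_2-u_2|=1$, or $v_2=u_2$ and $|v_1-u_1|=1$. A graph $H$ is a minor of $G$ if $H$ is isomorphic to a graph obtained from a subgraph of $G$ by contracting edges. *)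

theory Defs
  imports Complex_Main
begin

definition graph :: "'a set \<Rightarrow> ('a \<Rightarrow> 'a \<Rightarrow> bool) \<Rightarrow> bool" where
  "graph V E \<longleftrightarrow> finite V \<and> (\<forall>u v. E u v \<longrightarrow> u \<in> V \<and> v \<in> V \<and> u \<noteq> v \<and> E v u)"

definition subgraph :: "'a set \<Rightarrow> ('a \<Rightarrow> 'a \<Rightarrow> bool) \<Rightarrow> 'a set \<Rightarrow> ('a \<Rightarrow> 'a \<Rightarrow> bool) \<Rightarrow> bool" where
  "subgraph W F V E \<longleftrightarrow> graph W F \<and> W \<subseteq> V \<and> (\<forall>u v. F u v \<longrightarrow> E u v)"

definition radius_le :: "'a set \<Rightarrow> ('a \<Rightarrow> 'a \<Rightarrow> bool) \<Rightarrow> nat \<Rightarrow> bool" where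
  "radius_le W F r \<longleftrightarrow> (\<exists>x\<in>W. \<forall>y\<in>W. ((sup F (=)) ^^ r) x y)"

text \<open>Growth f_G(r): maximum number of vertices of a subgraph of radius at most r
  (the Sup of the empty set of naturals is 0).\<close>
definition growth :: "'a set \<Rightarrow> ('a \<Rightarrow> 'a \<Rightarrow> bool) \<Rightarrow> nat \<Rightarrow> nat" where
  "growth V E r = Sup {card W | W F. subgraph W F V E \<and> radius_le W F r}"

definition grid_V :: "nat \<Rightarrow> (nat \<times> nat) set" where
  "grid_V n = {1..n} \<times> {1..n}"

definition grid_E :: "nat \<Rightarrow> nat \<times> nat \<Rightarrow> nat \<times> nat \<Rightarrow> bool" where
  "grid_E n v u \<longleftrightarrow> v \<in> grid_V n \<and> u \<in> grid_V n \<and>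
     ((fst v = fst u \<and> (snd v = snd u + 1 \<or> snd u = snd v + 1)) \<or>
      (snd v = snd u \<and> (fst v = fst u + 1 \<or> fst u = fst v + 1)))"

definition graph_iso :: "'a set \<Rightarrow> ('a \<Rightarrow> 'a \<Rightarrow> bool) \<Rightarrow> 'b set \<Rightarrow> ('b \<Rightarrow> 'b \<Rightarrow> bool) \<Rightarrow> bool" where
  "graph_iso V1 E1 V2 E2 \<longleftrightarrow>
     (\<exists>f. bij_betw f V1 V2 \<and> (\<forall>u\<in>V1. \<forall>v\<in>V1. E1 u v \<longleftrightarrow> E2 (f u) (f v)))"

text \<open>Contracting the set C of edges of the graph (W,F): the vertices are the
  classes of vertices joined by C-paths, two distinct classes adjacent iff some F-edge joins them.\<close>
definition contract_V :: "'a set \<Rightarrow> ('a \<Rightarrow> 'a \<Rightarrow> bool) \<Rightarrow> 'a set set" where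
  "contract_V W C = {{y. C\<^sup>*\<^sup>* x y} | x. x \<in> W}"

definition contract_E :: "('a \<Rightarrow> 'a \<Rightarrow> bool) \<Rightarrow> 'a set \<Rightarrow> 'a set \<Rightarrow> bool" where
  "contract_E F X Y \<longleftrightarrow> X \<noteq> Y \<and> (\<exists>x\<in>X. \<exists>y\<in>Y. F x y)"

definition minor :: "'b set \<Rightarrow> ('b \<Rightarrow> 'b \<Rightarrow> bool) \<Rightarrow> 'a set \<Rightarrow> ('a \<Rightarrow> 'a \<Rightarrow> bool) \<Rightarrow> bool" where
  "minor VH EH VG EG \<longleftrightarrow>
     (\<exists>W F C. subgraph W F VG EG \<and> subgraph W C W F \<and>
        graph_iso VH EH (contract_V W C) (contract_E F))"

end

theory Submission
  imports Defs "HOL-Library.Disjoint_Sets"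
begin

(* Take a model of the n x n grid, n >= 2c, by pairwise disjoint connected branch sets, and let A
   be a row or column of minimum size k, say a row.  Since A is connected, a vertex x of A reaches
   all of A within distance k - 1.  Every column meets A and has at least k vertices, so the ball
   of radius k - 1 inside the column around a common vertex with A has at least k vertices.  A
   together with these n disjoint balls is a subgraph of radius at most 2(k - 1) around x with at
   least n k vertices, hence n k <= f_G(2k - 2) <= 2c(k - 1) < 2ck <= n k. *)

definition induced_adj :: "('a \<Rightarrow> 'a \<Rightarrow> bool) \<Rightarrow> 'a set \<Rightarrow> 'a \<Rightarrow> 'a \<Rightarrow> bool" where
  "induced_adj E S a b \<longleftrightarrow> E a b \<and> a \<in> S \<and> b \<in> S"

definition connected_in :: "('a \<Rightarrow> 'a \<Rightarrow> bool) \<Rightarrow> 'a set \<Rightarrow> bool" where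
  "connected_in E S \<longleftrightarrow> (\<forall>u\<in>S. \<forall>v\<in>S. (induced_adj E S)\<^sup>*\<^sup>* u v)"

(* The idle steps allowed by (=) make this the ball of radius t around p in the subgraph induced
   by S, with the reachability relation of radius_le. *)
definition ball_in :: "('a \<Rightarrow> 'a \<Rightarrow> bool) \<Rightarrow> 'a set \<Rightarrow> 'a \<Rightarrow> nat \<Rightarrow> 'a set" where
  "ball_in E S p t = {y. (sup (induced_adj E S) (=) ^^ t) p y}"

lemma graph_symp: "graph V E \<Longrightarrow> symp E"
  by (auto simp: graph_def intro: sympI)

lemma induced_adj_mono: "S \<subseteq> S' \<Longrightarrow> induced_adj E S \<le> induced_adj E S'"
  by (auto simp: induced_adj_def)

lemma symp_induced_adj: "symp E \<Longrightarrow> symp (induced_adj E S)"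
  by (auto simp: induced_adj_def symp_def)

lemma rtranclp_exit:
  assumes "R\<^sup>*\<^sup>* a b" "a \<in> X" "b \<notin> X"
  shows "\<exists>u v. R u v \<and> u \<in> X \<and> v \<notin> X"
  using assms by (induction rule: rtranclp_induct) auto

lemma connected_in_Un:
  assumes "symp E" "connected_in E S" "connected_in E T" "a \<in> S" "b \<in> T" "E a b"
  shows "connected_in E (S \<union> T)"
proof -
  let ?R = "induced_adj E (S \<union> T)"
  have walk_S: "?R\<^sup>*\<^sup>* u v" if "u \<in> S" "v \<in> S" for u v
    using assms(2) that rtranclp_mono[OF induced_adj_mono[of S "S \<union> T" E]]
    by (auto simp: connected_in_def)
  have walk_T: "?R\<^sup>*\<^sup>* u v" if "u \<in> T" "v \<in> T" for u v
    using assms(3) that rtranclp_mono[OF induced_adj_mono[of T "S \<union> T" E]]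
    by (auto simp: connected_in_def)
  have "?R a b" using assms(4-6) by (simp add: induced_adj_def)
  then have from_a: "?R\<^sup>*\<^sup>* a v" if "v \<in> S \<union> T" for v
    using that walk_S[OF assms(4)] walk_T[OF assms(5)]
    by (meson UnE converse_rtranclp_into_rtranclp)
  have "symp ?R\<^sup>*\<^sup>*"
    using assms(1) by (simp add: symp_induced_adj symp_rtranclp)
  then show ?thesis
    unfolding connected_in_def by (metis from_a rtranclp_trans sympD)
qed

lemma connected_in_UN_chain:
  assumes "symp E" "\<forall>j\<in>{1..m}. connected_in E (S j)"
    and "\<forall>j. 1 \<le> j \<and> j < m \<longrightarrow> (\<exists>a\<in>S j. \<exists>b\<in>S (Suc j). E a b)"
  shows "connected_in E (\<Union>j\<in>{1..m}. S j)"
  using assms(2,3)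
proof (induction m)
  case 0
  then show ?case by (simp add: connected_in_def)
next
  case (Suc m)
  show ?case
  proof (cases "m = 0")
    case True
    then show ?thesis using Suc.prems(1) by simp
  next
    case False
    then have "1 \<le> m \<and> m < Suc m" by simp
    then obtain a b where ab: "a \<in> S m" "b \<in> S (Suc m)" "E a b"
      using Suc.prems(2) by blast
    have "connected_in E (\<Union>j\<in>{1..m}. S j)"
      using Suc by simp
    moreover have "a \<in> (\<Union>j\<in>{1..m}. S j)"
      using ab(1) False by auto
    moreover have "connected_in E (S (Suc m))"
      using Suc.prems(1) by simp
    moreover have "(\<Union>j\<in>{1..Suc m}. S j) = (\<Union>j\<in>{1..m}. S j) \<union> S (Suc m)"
      by (auto simp: atLeastAtMostSuc_conv)
    ultimately show ?thesis
      using connected_in_Un[OF assms(1)] ab(2,3) by metis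
  qed
qed

lemma ball_in_0 [simp]: "ball_in E S p 0 = {p}"
  by (simp add: ball_in_def)

lemma ball_in_Suc:
  "ball_in E S p (Suc t) = ball_in E S p t \<union> {y. \<exists>x\<in>ball_in E S p t. induced_adj E S x y}"
  by (auto simp: ball_in_def)

lemma ball_in_mono_radius: "t \<le> t' \<Longrightarrow> ball_in E S p t \<subseteq> ball_in E S p t'"
  by (induction t' rule: dec_induct) (auto simp: ball_in_Suc)

lemma center_in_ball_in: "p \<in> ball_in E S p t"
  using ball_in_mono_radius[of 0 t] by auto

lemma ball_in_mono_set: "S \<subseteq> S' \<Longrightarrow> ball_in E S p t \<subseteq> ball_in E S' p t"
  by (induction t) (auto simp: ball_in_Suc induced_adj_def)

lemma ball_in_subset: "p \<in> S \<Longrightarrow> ball_in E S p t \<subseteq> S"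
  by (induction t) (auto simp: ball_in_Suc induced_adj_def)

lemma ball_in_trans:
  "q \<in> ball_in E S p s \<Longrightarrow> y \<in> ball_in E S q t \<Longrightarrow> y \<in> ball_in E S p (s + t)"
  by (auto simp: ball_in_def relpowp_add)

(* A walk of length at most t from p never leaves the ball of radius t. *)
lemma ball_in_ball_in: "ball_in E S p t \<subseteq> ball_in E (ball_in E S p t) p t"
proof (induction t)
  case 0
  then show ?case by simp
next
  case (Suc t)
  let ?B = "ball_in E S p"
  have "ball_in E (?B t) p t \<subseteq> ball_in E (?B (Suc t)) p t"
    by (rule ball_in_mono_set[OF ball_in_mono_radius]) simp
  then have inner: "?B t \<subseteq> ball_in E (?B (Suc t)) p t"
    using Suc.IH by blast
  show ?case
  proof
    fix y assume "y \<in> ?B (Suc t)"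
    then consider "y \<in> ?B t" | x where "x \<in> ?B t" "induced_adj E S x y"
      by (auto simp: ball_in_Suc)
    then show "y \<in> ball_in E (?B (Suc t)) p (Suc t)"
    proof cases
      case 1
      then show ?thesis using inner by (auto simp: ball_in_Suc)
    next
      case 2
      then have "induced_adj E (?B (Suc t)) x y"
        by (auto simp: induced_adj_def ball_in_Suc)
      then show ?thesis using 2(1) inner by (auto simp: ball_in_Suc)
    qed
  qed
qed

(* Breadth-first search: as S is connected, every layer adds a vertex until S is exhausted. *)
lemma card_ball_in_ge:
  assumes "finite S" "connected_in E S" "p \<in> S"
  shows "min (Suc t) (card S) \<le> card (ball_in E S p t)"
proof (induction t)
  case 0
  then show ?case by simp
next
  case (Suc t)
  let ?B = "ball_in E S p"
  have sub: "?B s \<subseteq> S" for s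
    using ball_in_subset[OF assms(3)] .
  have mono: "?B t \<subseteq> ?B (Suc t)"
    by (rule ball_in_mono_radius) simp
  show ?case
  proof (cases "?B t = S")
    case True
    then have "?B (Suc t) = S"
      using mono sub by blast
    then show ?thesis by simp
  next
    case False
    then obtain y where y: "y \<in> S" "y \<notin> ?B t"
      using sub by blast
    then have "(induced_adj E S)\<^sup>*\<^sup>* p y"
      using assms(2,3) by (simp add: connected_in_def)
    then obtain u v where "induced_adj E S u v" "u \<in> ?B t" "v \<notin> ?B t"
      using rtranclp_exit[OF _ center_in_ball_in y(2)] by blast
    then have "?B t \<subset> ?B (Suc t)"
      using mono by (auto simp: ball_in_Suc)
    moreover have "finite (?B (Suc t))"
      using sub assms(1) by (rule finite_subset)
    ultimately have "card (?B t) < card (?B (Suc t))"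
      by (rule psubset_card_mono[rotated])
    then show ?thesis
      using Suc.IH by linarith
  qed
qed

lemma ball_in_eq_connected:
  assumes "finite S" "connected_in E S" "p \<in> S" "card S \<le> Suc t"
  shows "ball_in E S p t = S"
proof (rule card_seteq[OF assms(1) ball_in_subset[OF assms(3)]])
  show "card S \<le> card (ball_in E S p t)"
    using card_ball_in_ge[OF assms(1-3), of t] assms(4) by simp
qed

lemma le_card_ball_in:
  assumes "finite S" "connected_in E S" "p \<in> S" "k \<le> card S"
  shows "k \<le> card (ball_in E S p (k - 1))"
  using card_ball_in_ge[OF assms(1-3), of "k - 1"] assms(4) by (cases k) auto

lemma card_le_growth:
  assumes "graph V E" "W \<subseteq> V" "x \<in> W" "W \<subseteq> ball_in E W x r"
  shows "card W \<le> growth V E r"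
proof -
  have "finite V"
    using assms(1) by (simp add: graph_def)
  then have "subgraph W (induced_adj E W) V E"
    using assms(1,2) finite_subset by (fastforce simp: subgraph_def graph_def induced_adj_def)
  moreover have "radius_le W (induced_adj E W) r"
    using assms(3,4) by (auto simp: radius_le_def ball_in_def)
  moreover have "bdd_above {card W | W F. subgraph W F V E \<and> radius_le W F r}"
    using \<open>finite V\<close> by (auto simp: bdd_above_def subgraph_def intro!: card_mono)
  ultimately show ?thesis
    unfolding growth_def by (blast intro: cSup_upper)
qed

lemma card_UN_disjoint_ge:
  assumes "finite J" "\<And>j. j \<in> J \<Longrightarrow> finite (T j)" "disjoint_family_on T J"
    and "\<And>j. j \<in> J \<Longrightarrow> k \<le> card (T j)"
  shows "card J * k \<le> card (\<Union>j\<in>J. T j)"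
proof -
  have "card J * k \<le> (\<Sum>j\<in>J. card (T j))"
    using assms(4) sum_bounded_below[of J k "\<lambda>j. card (T j)"] by (simp add: mult.commute)
  also have "\<dots> = card (\<Union>j\<in>J. T j)"
    using assms(1-3) by (intro card_UN_disjoint'[symmetric])
  finally show ?thesis .
qed

lemma hub_subset_ball_in:
  assumes "A \<subseteq> ball_in E A x s" "\<forall>j\<in>J. p j \<in> A"
  shows "A \<union> (\<Union>j\<in>J. ball_in E (Q j) (p j) t)
    \<subseteq> ball_in E (A \<union> (\<Union>j\<in>J. ball_in E (Q j) (p j) t)) x (s + t)"
    (is "?W \<subseteq> ball_in E ?W x _")
proof
  have "ball_in E A x s \<subseteq> ball_in E ?W x s"
    by (rule ball_in_mono_set) simp
  then have to_A: "A \<subseteq> ball_in E ?W x s"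
    using assms(1) by blast
  fix y assume "y \<in> ?W"
  then consider "y \<in> A" | j where "j \<in> J" "y \<in> ball_in E (Q j) (p j) t"
    by blast
  then show "y \<in> ball_in E ?W x (s + t)"
  proof cases
    case 1
    then show ?thesis
      using to_A ball_in_mono_radius[where t=s and t'="s + t" and E=E and S="?W" and p=x] by auto
  next
    case 2
    let ?T = "ball_in E (Q j) (p j) t"
    have "?T \<subseteq> ball_in E ?T (p j) t"
      by (rule ball_in_ball_in)
    also have "\<dots> \<subseteq> ball_in E ?W (p j) t"
      by (rule ball_in_mono_set) (use 2(1) in auto)
    finally have "y \<in> ball_in E ?W (p j) t"
      using 2(2) by blast
    moreover have "p j \<in> ball_in E ?W x s"
      using to_A assms(2) 2(1) by blast
    ultimately show ?thesis
      by (rule ball_in_trans[rotated])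
  qed
qed

lemma comb_card_le_growth:
  assumes G: "graph V E"
    and A: "A \<subseteq> V" "connected_in E A" "A \<noteq> {}"
    and Q: "\<forall>j\<in>J. Q j \<subseteq> V \<and> connected_in E (Q j) \<and> Q j \<inter> A \<noteq> {} \<and> card A \<le> card (Q j)"
    and disj: "disjoint_family_on Q J" and "finite J"
  shows "card J * card A \<le> growth V E (2 * (card A - 1))"
proof -
  define k where "k = card A"
  have "finite V"
    using G by (simp add: graph_def)
  then have fin: "finite X" if "X \<subseteq> V" for X
    using that finite_subset by blast
  obtain x where x: "x \<in> A"
    using A(3) by blast
  have A_ball: "A \<subseteq> ball_in E A x (k - 1)"
    using ball_in_eq_connected[OF fin[OF A(1)] A(2) x] by (simp add: k_def)
  have "\<forall>j\<in>J. \<exists>q. q \<in> Q j \<inter> A"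
    using Q by blast
  then obtain p where p: "\<forall>j\<in>J. p j \<in> Q j \<inter> A"
    by (rule bchoice[elim_format]) blast
  define T where "T j = ball_in E (Q j) (p j) (k - 1)" for j
  have T_sub: "T j \<subseteq> Q j" if "j \<in> J" for j
    unfolding T_def by (rule ball_in_subset) (use p that in blast)
  have card_T: "k \<le> card (T j)" if "j \<in> J" for j
    unfolding T_def k_def using Q p that fin by (intro le_card_ball_in) auto
  define W where "W = A \<union> (\<Union>j\<in>J. T j)"
  have "W \<subseteq> V"
    unfolding W_def using A(1) Q T_sub by blast
  moreover have "x \<in> W"
    unfolding W_def using x by blast
  moreover have "W \<subseteq> ball_in E W x ((k - 1) + (k - 1))"
    unfolding W_def T_def by (rule hub_subset_ball_in[OF A_ball]) (use p in blast)
  ultimately have "card W \<le> growth V E (2 * (k - 1))"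
    unfolding mult_2 by (rule card_le_growth[OF G])
  moreover have "card J * k \<le> card (\<Union>j\<in>J. T j)"
  proof (rule card_UN_disjoint_ge[OF \<open>finite J\<close> _ _ card_T])
    show "finite (T j)" if "j \<in> J" for j
      using T_sub[OF that] Q that fin by blast
    show "disjoint_family_on T J"
      using disj T_sub unfolding disjoint_family_on_def by blast
  qed
  moreover have "card (\<Union>j\<in>J. T j) \<le> card W"
    using fin[OF \<open>W \<subseteq> V\<close>] by (rule card_mono) (simp add: W_def)
  ultimately show ?thesis
    by (simp add: k_def)
qed

definition minor_model ::
    "'b set \<Rightarrow> ('b \<Rightarrow> 'b \<Rightarrow> bool) \<Rightarrow> ('b \<Rightarrow> 'a set) \<Rightarrow> 'a set \<Rightarrow> ('a \<Rightarrow> 'a \<Rightarrow> bool) \<Rightarrow> bool" where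
  "minor_model VH EH B VG EG \<longleftrightarrow>
     (\<forall>h\<in>VH. B h \<noteq> {} \<and> B h \<subseteq> VG \<and> connected_in EG (B h)) \<and>
     disjoint_family_on B VH \<and>
     (\<forall>g\<in>VH. \<forall>h\<in>VH. EH g h \<longrightarrow> (\<exists>a\<in>B g. \<exists>b\<in>B h. EG a b))"

lemma connected_in_rtranclp_class:
  assumes "\<And>u v. C u v \<Longrightarrow> E u v" "symp C"
  shows "connected_in E {y. C\<^sup>*\<^sup>* x y}"
proof -
  let ?K = "{y. C\<^sup>*\<^sup>* x y}"
  have walk: "(induced_adj E ?K)\<^sup>*\<^sup>* u v" if "C\<^sup>*\<^sup>* u v" "u \<in> ?K" for u v
    using that
  proof (induction rule: rtranclp_induct)
    case (step y z)
    have "C\<^sup>*\<^sup>* x y"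
      using step.prems step.hyps(1) by (simp add: rtranclp_trans)
    then have "induced_adj E ?K y z"
      using assms(1) step.hyps(2) by (simp add: induced_adj_def)
    with step.IH step.prems show ?case
      by (simp add: rtranclp.rtrancl_into_rtrancl)
  qed simp
  show ?thesis
    unfolding connected_in_def
  proof (intro ballI)
    fix u v assume "u \<in> ?K" "v \<in> ?K"
    then have "C\<^sup>*\<^sup>* u x" "C\<^sup>*\<^sup>* x v"
      using sympD[OF symp_rtranclp[OF assms(2)]] by auto
    then have "C\<^sup>*\<^sup>* u v"
      by (rule rtranclp_trans)
    then show "(induced_adj E ?K)\<^sup>*\<^sup>* u v"
      using walk \<open>u \<in> ?K\<close> by blast
  qed
qed

lemma contract_V_class_eq:
  assumes "symp C" "X \<in> contract_V W C" "Y \<in> contract_V W C" "X \<inter> Y \<noteq> {}"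
  shows "X = Y"
proof -
  obtain x y z where X: "X = {w. C\<^sup>*\<^sup>* x w}" and Y: "Y = {w. C\<^sup>*\<^sup>* y w}"
    and z: "C\<^sup>*\<^sup>* x z" "C\<^sup>*\<^sup>* y z"
    using assms(2-4) unfolding contract_V_def by blast
  have sym: "C\<^sup>*\<^sup>* u v \<Longrightarrow> C\<^sup>*\<^sup>* v u" for u v
    using sympD[OF symp_rtranclp[OF assms(1)]] .
  have "C\<^sup>*\<^sup>* x y"
    using z(1) sym[OF z(2)] by (rule rtranclp_trans)
  moreover have "C\<^sup>*\<^sup>* y x"
    using z(2) sym[OF z(1)] by (rule rtranclp_trans)
  ultimately show ?thesis
    unfolding X Y by (auto intro: rtranclp_trans)
qed

lemma contract_V_connected:
  assumes "subgraph W C W F" "X \<in> contract_V W C" "\<And>u v. C u v \<Longrightarrow> E u v"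
  shows "X \<noteq> {}" "X \<subseteq> W" "connected_in E X"
proof -
  obtain x where x: "x \<in> W" "X = {y. C\<^sup>*\<^sup>* x y}"
    using assms(2) unfolding contract_V_def by blast
  then show "X \<noteq> {}"
    by blast
  have C_W: "C u v \<Longrightarrow> v \<in> W" for u v
    using assms(1) unfolding subgraph_def graph_def by blast
  have "C\<^sup>*\<^sup>* x y \<Longrightarrow> y \<in> W" for y
    by (induction rule: rtranclp_induct) (use x(1) C_W in blast)+
  then show "X \<subseteq> W"
    using x(2) by blast
  have "symp C"
    using assms(1) graph_symp unfolding subgraph_def by blast
  then show "connected_in E X"
    unfolding x(2) using assms(3) by (rule connected_in_rtranclp_class[rotated])
qed

lemma minor_imp_minor_model:
  assumes "minor VH EH VG EG"
  shows "\<exists>B. minor_model VH EH B VG EG"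
proof -
  obtain W F C B where sub: "subgraph W F VG EG" "subgraph W C W F"
    and bij: "bij_betw B VH (contract_V W C)"
    and iso: "\<forall>g\<in>VH. \<forall>h\<in>VH. EH g h \<longleftrightarrow> contract_E F (B g) (B h)"
    using assms unfolding minor_def graph_iso_def by blast
  have F_E: "F u v \<Longrightarrow> EG u v" for u v
    using sub(1) by (simp add: subgraph_def)
  have C_E: "C u v \<Longrightarrow> EG u v" for u v
    using sub(2) F_E by (simp add: subgraph_def)
  have B: "B h \<in> contract_V W C" if "h \<in> VH" for h
    using bij_betw_apply[OF bij that] .
  have "B h \<noteq> {} \<and> B h \<subseteq> VG \<and> connected_in EG (B h)" if "h \<in> VH" for h
    using contract_V_connected[where E=EG, OF sub(2) B[OF that] C_E] sub(1)
    by (auto simp: subgraph_def)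
  moreover have "disjoint_family_on B VH"
    unfolding disjoint_family_on_def
  proof (intro ballI impI)
    fix g h assume gh: "g \<in> VH" "h \<in> VH" "g \<noteq> h"
    then have "B g \<noteq> B h"
      using bij_betw_imp_inj_on[OF bij] by (simp add: inj_on_eq_iff)
    moreover have "symp C"
      using sub(2) graph_symp unfolding subgraph_def by blast
    ultimately show "B g \<inter> B h = {}"
      using contract_V_class_eq B gh(1,2) by blast
  qed
  moreover have "\<exists>a\<in>B g. \<exists>b\<in>B h. EG a b" if "g \<in> VH" "h \<in> VH" "EH g h" for g h
    using iso that F_E unfolding contract_E_def by blast
  ultimately have "minor_model VH EH B VG EG"
    unfolding minor_model_def by blast
  then show ?thesis by blast
qed

(* The columns of a grid model B are the rows of B \<circ> prod.swap. *)
definition grid_row :: "nat \<Rightarrow> (nat \<times> nat \<Rightarrow> 'a set) \<Rightarrow> nat \<Rightarrow> 'a set" where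
  "grid_row n B i = (\<Union>j\<in>{1..n}. B (i, j))"

lemma swap_in_grid_V [simp]: "prod.swap g \<in> grid_V n \<longleftrightarrow> g \<in> grid_V n"
  by (cases g) (auto simp: grid_V_def)

lemma grid_E_swap [simp]: "grid_E n (prod.swap g) (prod.swap h) \<longleftrightarrow> grid_E n g h"
  by (cases g; cases h) (auto simp: grid_E_def grid_V_def)

lemma minor_model_grid_swap:
  assumes "minor_model (grid_V n) (grid_E n) B V E"
  shows "minor_model (grid_V n) (grid_E n) (B \<circ> prod.swap) V E"
  using assms unfolding minor_model_def disjoint_family_on_def
  by (metis comp_apply swap_in_grid_V grid_E_swap swap_swap)

lemma connected_in_grid_row:
  assumes "symp E" "minor_model (grid_V n) (grid_E n) B V E" "i \<in> {1..n}"
  shows "connected_in E (grid_row n B i)"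
  unfolding grid_row_def
proof (rule connected_in_UN_chain[OF assms(1)])
  show "\<forall>j\<in>{1..n}. connected_in E (B (i, j))"
    using assms(2,3) by (simp add: minor_model_def grid_V_def)
  show "\<forall>j. 1 \<le> j \<and> j < n \<longrightarrow> (\<exists>a\<in>B (i, j). \<exists>b\<in>B (i, Suc j). E a b)"
  proof (intro allI impI)
    fix j assume "1 \<le> j \<and> j < n"
    then have "(i, j) \<in> grid_V n" "(i, Suc j) \<in> grid_V n" "grid_E n (i, j) (i, Suc j)"
      using assms(3) by (auto simp: grid_V_def grid_E_def)
    then show "\<exists>a\<in>B (i, j). \<exists>b\<in>B (i, Suc j). E a b"
      using assms(2) unfolding minor_model_def by blast
  qed
qed

lemma card_grid_row_ge:
  assumes "finite V" "minor_model (grid_V n) (grid_E n) B V E" "i \<in> {1..n}"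
  shows "n \<le> card (grid_row n B i)"
proof -
  have B: "B (i, j) \<noteq> {}" "B (i, j) \<subseteq> V" if "j \<in> {1..n}" for j
    using assms(2,3) that by (simp_all add: minor_model_def grid_V_def)
  have "card {1..n} * 1 \<le> card (\<Union>j\<in>{1..n}. B (i, j))"
  proof (rule card_UN_disjoint_ge)
    show "finite (B (i, j))" if "j \<in> {1..n}" for j
      using B(2)[OF that] assms(1) by (rule finite_subset)
    then show "1 \<le> card (B (i, j))" if "j \<in> {1..n}" for j
      using B(1)[OF that] that by (simp add: Suc_le_eq card_gt_0_iff)
    show "disjoint_family_on (\<lambda>j. B (i, j)) {1..n}"
      using assms(2,3) by (auto simp: minor_model_def disjoint_family_on_def grid_V_def)
  qed simp
  then show ?thesis
    by (simp add: grid_row_def)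
qed

lemma grid_row_subset:
  assumes "minor_model (grid_V n) (grid_E n) B V E" "i \<in> {1..n}"
  shows "grid_row n B i \<subseteq> V"
  using assms unfolding grid_row_def minor_model_def grid_V_def by blast

lemma disjoint_family_on_grid_row:
  assumes "minor_model (grid_V n) (grid_E n) B V E"
  shows "disjoint_family_on (grid_row n B) {1..n}"
  unfolding disjoint_family_on_def
proof (intro ballI impI)
  fix i i' assume "i \<in> {1..n}" "i' \<in> {1..n}" "i \<noteq> i'"
  then have "B (i, j) \<inter> B (i', j') = {}" if "j \<in> {1..n}" "j' \<in> {1..n}" for j j'
    using assms that unfolding minor_model_def by (auto simp: grid_V_def disjoint_family_on_def)
  then show "grid_row n B i \<inter> grid_row n B i' = {}"
    unfolding grid_row_def by fastforce
qed

lemma grid_row_comb_growth: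
  assumes G: "graph V E" and M: "minor_model (grid_V n) (grid_E n) B V E" and i: "i \<in> {1..n}"
    and min: "\<forall>j\<in>{1..n}. card (grid_row n B i) \<le> card (grid_row n (B \<circ> prod.swap) j)"
  shows "n * card (grid_row n B i) \<le> growth V E (2 * (card (grid_row n B i) - 1))"
proof -
  let ?A = "grid_row n B i" and ?Q = "grid_row n (B \<circ> prod.swap)"
  have M': "minor_model (grid_V n) (grid_E n) (B \<circ> prod.swap) V E"
    using minor_model_grid_swap[OF M] .
  have "symp E"
    using G by (rule graph_symp)
  have meet: "B (i, j) \<subseteq> ?Q j \<inter> ?A" "B (i, j) \<noteq> {}" if "j \<in> {1..n}" for j
    using i that M by (auto simp: grid_row_def minor_model_def grid_V_def)
  have "\<forall>j\<in>{1..n}. ?Q j \<subseteq> V \<and> connected_in E (?Q j) \<and> ?Q j \<inter> ?A \<noteq> {} \<and> card ?A \<le> card (?Q j)"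
    using grid_row_subset[OF M'] connected_in_grid_row[OF \<open>symp E\<close> M'] meet min by blast
  moreover have "?A \<noteq> {}"
    using meet[OF i] by blast
  ultimately show ?thesis
    using comb_card_le_growth[OF G grid_row_subset[OF M i] connected_in_grid_row[OF \<open>symp E\<close> M i]
        _ _ disjoint_family_on_grid_row[OF M']]
    by simp
qed

lemma exists_min_grid_row:
  assumes "minor_model (grid_V n) (grid_E n) B V E" "1 \<le> n"
  obtains B' i where "minor_model (grid_V n) (grid_E n) B' V E" "i \<in> {1..n}"
    "\<forall>j\<in>{1..n}. card (grid_row n B' i) \<le> card (grid_row n (B' \<circ> prod.swap) j)"
proof -
  let ?row = "\<lambda>B i. card (grid_row n B i)" and ?B' = "B \<circ> prod.swap"
  have "1 \<in> {1..n}"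
    using assms(2) by simp
  then obtain i where i: "i \<in> {1..n}" "\<forall>i'\<in>{1..n}. ?row B i \<le> ?row B i'"
    using ex_has_least_nat[of "\<lambda>i. i \<in> {1..n}" 1 "?row B"] by blast
  obtain j where j: "j \<in> {1..n}" "\<forall>j'\<in>{1..n}. ?row ?B' j \<le> ?row ?B' j'"
    using ex_has_least_nat[of "\<lambda>i. i \<in> {1..n}" 1 "?row ?B'"] \<open>1 \<in> {1..n}\<close> by blast
  show ?thesis
  proof (cases "?row B i \<le> ?row ?B' j")
    case True
    then show ?thesis
      using that[OF assms(1) i(1)] j(2) le_trans by blast
  next
    case False
    have "?B' \<circ> prod.swap = B"
      by (simp add: comp_assoc)
    then show ?thesis
      using that[OF minor_model_grid_swap[OF assms(1)] j(1)] False i(2) by fastforce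
  qed
qed

lemma grid_minor_growth:
  assumes G: "graph V E" and "minor (grid_V n) (grid_E n) V E" and "1 \<le> n"
  shows "\<exists>k\<ge>n. n * k \<le> growth V E (2 * (k - 1))"
proof -
  obtain B where "minor_model (grid_V n) (grid_E n) B V E"
    using minor_imp_minor_model assms(2) by blast
  then obtain B' i where M: "minor_model (grid_V n) (grid_E n) B' V E" and i: "i \<in> {1..n}"
    and min: "\<forall>j\<in>{1..n}. card (grid_row n B' i) \<le> card (grid_row n (B' \<circ> prod.swap) j)"
    using exists_min_grid_row assms(3) by blast
  have "finite V"
    using G by (simp add: graph_def)
  then have "n \<le> card (grid_row n B' i)"
    by (rule card_grid_row_ge[OF _ M i])
  moreover have "n * card (grid_row n B' i) \<le> growth V E (2 * (card (grid_row n B' i) - 1))"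
    by (rule grid_row_comb_growth[OF G M i min])
  ultimately show ?thesis
    by blast
qed

theorem theorem9:
  fixes c :: real and V :: "'a set" and E :: "'a \<Rightarrow> 'a \<Rightarrow> bool"
  assumes "c \<ge> 1"
    and "graph V E"
    and "\<forall>r::nat. r > 0 \<longrightarrow> real (growth V E r) \<le> c * real r"
  shows "\<not> minor (grid_V (nat \<lceil>2 * c\<rceil>)) (grid_E (nat \<lceil>2 * c\<rceil>)) V E"
proof
  define n where "n = nat \<lceil>2 * c\<rceil>"
  have "real n = of_int \<lceil>2 * c\<rceil>"
    using assms(1) by (simp add: n_def)
  then have n: "2 * c \<le> real n"
    by linarith
  then have "2 \<le> n"
    using assms(1) by linarith
  assume "minor (grid_V (nat \<lceil>2 * c\<rceil>)) (grid_E (nat \<lceil>2 * c\<rceil>)) V E"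
  then obtain k where k: "n \<le> k" "n * k \<le> growth V E (2 * (k - 1))"
    using grid_minor_growth[OF assms(2)] \<open>2 \<le> n\<close> unfolding n_def by fastforce
  have "0 < 2 * (k - 1)"
    using \<open>2 \<le> n\<close> k(1) by simp
  have "real n * real k \<le> real (growth V E (2 * (k - 1)))"
    using k(2) by (metis of_nat_mono of_nat_mult)
  also have "\<dots> \<le> c * real (2 * (k - 1))"
    using assms(3) \<open>0 < 2 * (k - 1)\<close> by blast
  also have "\<dots> < 2 * c * real k"
    using \<open>2 \<le> n\<close> k(1) assms(1) by (simp add: of_nat_diff algebra_simps)
  also have "\<dots> \<le> real n * real k"
    using n by (simp add: mult_right_mono)
  finally show False
    by simp
qed

end
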